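(* Let $\sigma:[0,\infty)\to[0,\infty)$ be nondecreasing with $\lim_{t\to\infty}\sigma(t)=\infty$. Assume that $\sigma^{\iota}\sim((\sigma^{\iota})_{\star})^{\star}$ on $(0,\infty)$. Then $\gamma(\sigma)+1=\gamma((\sigma^{\iota})_{\star})$.
   Context: $\sigma^{\iota}(t):=\sigma(1/t)$ for $t>0$ (nonincreasing, tending to $\infty$ as $t\to0$). For $h:(0,\infty)\to[0,\infty)$ nonincreasing with $\lim_{t\to0}h(t)=\infty$, its lower Legendre conjugate is $h_{\star}(t):=\inf_{s>0}\{h(s)+ts\}$, $t\ge0$ (nondecreasing, concave, tending to $\infty$). For a nondecreasing $g$, its upper Legendre conjugate is $g^{\star}(s):=\sup_{t\ge0}\{g(t)-st\}$, $s>0$; $((\sigma^{\iota})_{\star})^{\star}$ is the largest convex minorant of $\sigma^{\iota}$. $f\sim g$ on an interval $I$ means there is $C\ge1$ with $C^{-1}g-C\le f\le Cg+C$ on $I$. For a nondecreasing function $\sigma$ tending to $\infty$ and $\gamma>0$, $(P_{\sigma,\gamma})$ holds if there is $K>1$ with $\limsup_{t\to\infty}\sigma(K^{\gamma}t)/\sigma(t)<K$; $\gamma(\sigma):=\sup\{\gamma>0:(P_{\sigma,\gamma})\text{ holds}\}$, and $:=0$ if none holds. *)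

theory Defs
  imports "HOL-Analysis.Analysis"
begin

definition iota :: "(real \<Rightarrow> real) \<Rightarrow> real \<Rightarrow> real" where
  "iota \<sigma> t = \<sigma> (1 / t)"

text \<open>lower Legendre conjugate, used for t >= 0\<close>
definition lower_conj :: "(real \<Rightarrow> real) \<Rightarrow> real \<Rightarrow> real" where
  "lower_conj h t = (INF s\<in>{0<..}. h s + t * s)"

text \<open>upper Legendre conjugate, used for s > 0\<close>
definition upper_conj :: "(real \<Rightarrow> real) \<Rightarrow> real \<Rightarrow> real" where
  "upper_conj g s = (SUP t\<in>{0..}. g t - s * t)"

definition equiv_on :: "real set \<Rightarrow> (real \<Rightarrow> real) \<Rightarrow> (real \<Rightarrow> real) \<Rightarrow> bool" where
  "equiv_on I f g \<longleftrightarrow> (\<exists>C\<ge>1. \<forall>t\<in>I. g t / C - C \<le> f t \<and> f t \<le> C * g t + C)"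

definition P_prop :: "(real \<Rightarrow> real) \<Rightarrow> real \<Rightarrow> bool" where
  "P_prop \<sigma> \<gamma> \<longleftrightarrow> (\<exists>K>1. Limsup at_top (\<lambda>t. ereal (\<sigma> (K powr \<gamma> * t) / \<sigma> t)) < ereal K)"

definition gamma_idx :: "(real \<Rightarrow> real) \<Rightarrow> ereal" where
  "gamma_idx \<sigma> = (if \<exists>\<gamma>>0. P_prop \<sigma> \<gamma>
      then Sup (ereal ` {\<gamma>. \<gamma> > 0 \<and> P_prop \<sigma> \<gamma>}) else 0)"

end

theory Submission
  imports Defs
begin

(*
  Write g for lower_conj (iota sigma); substituting s = 1/u, g t = inf_{u>0} (sigma u + t/u).
  For a function f tending to infinity and gamma > 0, P_prop f gamma says exactly that
  eventually f (L t) <= q f t for some q >= 1 with q powr gamma < L.  A bound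
  sigma (L u) <= q sigma u passes to g (L q t) <= q g t, and q powr (gamma + 1) < L q, so
  indices of sigma go up by one; moreover g (2 t) <= 2 g t makes every gamma < 1 an index of g.
  Conversely, iterating g (L t) <= q g t gives g (N t) <= Q g t with N = L^n, Q = q^n, hence
  upper_conj g (Q / (N x)) <= Q sigma x + D.  The equivalence of iota sigma with
  upper_conj g turns this into sigma (N x / Q) <= (C + 1) Q sigma x, which for n large
  witnesses the index gamma - 1 of sigma.
*)

lemma P_propE:
  fixes f :: "real \<Rightarrow> real"
  assumes "P_prop f \<gamma>" and "\<gamma> > 0" and "filterlim f at_top at_top"
  obtains L q where "1 \<le> q" "q powr \<gamma> < L" "eventually (\<lambda>t. f (L * t) \<le> q * f t) at_top"
proof -
  obtain K where "K > 1" and "Limsup at_top (\<lambda>t. ereal (f (K powr \<gamma> * t) / f t)) < ereal K"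
    using assms(1) unfolding P_prop_def by blast
  then obtain q0 where q0: "Limsup at_top (\<lambda>t. ereal (f (K powr \<gamma> * t) / f t)) < ereal q0"
    and "ereal q0 < ereal K"
    using ereal_dense2 by blast
  define q where "q = max q0 1"
  have "q < K" using \<open>ereal q0 < ereal K\<close> \<open>K > 1\<close> by (simp add: q_def)
  then have "q powr \<gamma> < K powr \<gamma>"
    using \<open>\<gamma> > 0\<close> by (intro powr_less_mono2) (auto simp: q_def)
  moreover have "eventually (\<lambda>t. f (K powr \<gamma> * t) \<le> q * f t) at_top"
    using Limsup_lessD[OF q0] assms(3)[unfolded filterlim_at_top_dense, rule_format, of 0]
  proof eventually_elim
    case (elim t)
    then have "f (K powr \<gamma> * t) \<le> q0 * f t" by (simp add: divide_less_eq)
    also have "\<dots> \<le> q * f t" using elim by (simp add: q_def)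
    finally show ?case .
  qed
  moreover have "1 \<le> q" by (simp add: q_def)
  ultimately show ?thesis using that by blast
qed

lemma P_propI:
  fixes f :: "real \<Rightarrow> real"
  assumes "\<gamma> > 0" and "filterlim f at_top at_top"
    and "1 \<le> q" "q powr \<gamma> < L" "eventually (\<lambda>t. f (L * t) \<le> q * f t) at_top"
  shows "P_prop f \<gamma>"
proof -
  define K where "K = L powr (1 / \<gamma>)"
  have "L > 0" using \<open>1 \<le> q\<close> \<open>q powr \<gamma> < L\<close> by (smt (verit) powr_gt_zero)
  then have KL: "K powr \<gamma> = L" using \<open>\<gamma> > 0\<close> by (simp add: K_def powr_powr)
  have "q = (q powr \<gamma>) powr (1 / \<gamma>)" using \<open>\<gamma> > 0\<close> \<open>1 \<le> q\<close> by (simp add: powr_powr)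
  also have "\<dots> < K"
    unfolding K_def using \<open>\<gamma> > 0\<close> \<open>q powr \<gamma> < L\<close> by (intro powr_less_mono2) auto
  finally have "q < K" .
  have "eventually (\<lambda>t. ereal (f (K powr \<gamma> * t) / f t) \<le> ereal q) at_top"
    using assms(5) assms(2)[unfolded filterlim_at_top_dense, rule_format, of 0]
    by eventually_elim (simp add: KL divide_le_eq)
  then have "Limsup at_top (\<lambda>t. ereal (f (K powr \<gamma> * t) / f t)) \<le> ereal q"
    by (rule Limsup_bounded)
  also have "\<dots> < ereal K" using \<open>q < K\<close> by simp
  finally show ?thesis
    unfolding P_prop_def using \<open>q < K\<close> \<open>1 \<le> q\<close> by (intro exI[of _ K]) auto
qed

lemma eventually_power_mult_le:
  fixes f :: "real \<Rightarrow> real"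
  assumes "L \<ge> 1" "q \<ge> 0" and "eventually (\<lambda>t. f (L * t) \<le> q * f t) at_top"
  shows "eventually (\<lambda>t. f (L ^ n * t) \<le> q ^ n * f t) at_top"
proof -
  obtain t0 where t0: "\<And>t. t \<ge> t0 \<Longrightarrow> f (L * t) \<le> q * f t"
    using assms(3) unfolding eventually_at_top_linorder by blast
  show ?thesis
    using eventually_ge_at_top[of "max t0 0"]
  proof eventually_elim
    case (elim t)
    show ?case
    proof (induction n)
      case (Suc n)
      have "t \<le> L ^ n * t"
        using \<open>L \<ge> 1\<close> elim by (simp add: mult_le_cancel_right1)
      then have "f (L * (L ^ n * t)) \<le> q * f (L ^ n * t)"
        using t0 elim by simp
      also have "\<dots> \<le> q * (q ^ n * f t)"
        using Suc.IH \<open>q \<ge> 0\<close> by (simp add: mult_left_mono)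
      finally show ?case by (simp add: mult.assoc)
    qed simp
  qed
qed

lemma ex_mult_power_powr_less:
  fixes c q L \<gamma> :: real
  assumes "c > 0" "q \<ge> 1" "q powr \<gamma> < L"
  shows "\<exists>n. (c * q ^ n) powr (\<gamma> - 1) < L ^ n / q ^ n"
proof -
  define \<rho> where "\<rho> = L / q powr \<gamma>"
  have "\<rho> > 1" using assms by (simp add: \<rho>_def less_divide_eq)
  then obtain n where n: "c powr (\<gamma> - 1) < \<rho> ^ n" using real_arch_pow by blast
  have "(c * q ^ n) powr (\<gamma> - 1) = c powr (\<gamma> - 1) * (q powr (\<gamma> - 1)) ^ n"
    using assms by (simp add: powr_mult powr_power powr_powr mult.commute flip: powr_realpow)
  also have "\<dots> < \<rho> ^ n * (q powr (\<gamma> - 1)) ^ n"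
    using n \<open>q \<ge> 1\<close> by (intro mult_strict_right_mono) auto
  also have "\<rho> * q powr (\<gamma> - 1) = L / q"
    using \<open>q \<ge> 1\<close> by (simp add: \<rho>_def powr_diff)
  then have "\<rho> ^ n * (q powr (\<gamma> - 1)) ^ n = L ^ n / q ^ n"
    by (simp add: power_divide flip: power_mult_distrib)
  finally show ?thesis by blast
qed

lemma lower_conj_iota_le:
  assumes nonneg: "\<And>u. u > 0 \<Longrightarrow> 0 \<le> \<sigma> u" and "t \<ge> 0" and "u > 0"
  shows "lower_conj (iota \<sigma>) t \<le> \<sigma> u + t / u"
proof -
  have "bdd_below ((\<lambda>s. iota \<sigma> s + t * s) ` {0<..})"
    using nonneg \<open>t \<ge> 0\<close> by (intro bdd_belowI2[where m = 0]) (simp add: iota_def)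
  then have "lower_conj (iota \<sigma>) t \<le> iota \<sigma> (1 / u) + t * (1 / u)"
    unfolding lower_conj_def using \<open>u > 0\<close> by (intro cINF_lower) auto
  then show ?thesis by (simp add: iota_def)
qed

lemma le_lower_conj_iota:
  assumes "\<And>u. u > 0 \<Longrightarrow> B \<le> \<sigma> u + t / u"
  shows "B \<le> lower_conj (iota \<sigma>) t"
  unfolding lower_conj_def
proof (rule cINF_greatest)
  fix s :: real
  assume "s \<in> {0<..}"
  then show "B \<le> iota \<sigma> s + t * s"
    using assms[of "1 / s"] by (simp add: iota_def)
qed auto

lemma le_mult_lower_conj_iota:
  assumes "c > 0" and "\<And>u. u > 0 \<Longrightarrow> B \<le> c * (\<sigma> u + t / u)"
  shows "B \<le> c * lower_conj (iota \<sigma>) t"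
proof -
  have "B / c \<le> lower_conj (iota \<sigma>) t"
    using assms by (intro le_lower_conj_iota) (simp add: divide_le_eq mult.commute)
  then show ?thesis
    using \<open>c > 0\<close> by (simp add: divide_le_eq mult.commute)
qed

lemma lower_conj_iota_mult_le:
  assumes nonneg: "\<And>u. u > 0 \<Longrightarrow> 0 \<le> \<sigma> u" and "t \<ge> 0" and "L \<ge> 1"
  shows "lower_conj (iota \<sigma>) (L * t) \<le> L * lower_conj (iota \<sigma>) t"
proof (rule le_mult_lower_conj_iota)
  fix u :: real
  assume "u > 0"
  have "lower_conj (iota \<sigma>) (L * t) \<le> \<sigma> u + L * t / u"
    using lower_conj_iota_le[of \<sigma> "L * t" u] nonneg assms \<open>u > 0\<close> by simp
  also have "\<dots> \<le> L * (\<sigma> u + t / u)"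
    using nonneg[OF \<open>u > 0\<close>] \<open>L \<ge> 1\<close> by (simp add: algebra_simps mult_le_cancel_right1)
  finally show "lower_conj (iota \<sigma>) (L * t) \<le> L * (\<sigma> u + t / u)" .
qed (use \<open>L \<ge> 1\<close> in simp)

lemma filterlim_lower_conj_iota_at_top:
  assumes nonneg: "\<And>u. u > 0 \<Longrightarrow> 0 \<le> \<sigma> u" and lim: "filterlim \<sigma> at_top at_top"
  shows "filterlim (lower_conj (iota \<sigma>)) at_top at_top"
  unfolding filterlim_at_top_ge[where c = 0]
proof (intro allI impI)
  fix B :: real
  assume "B \<ge> 0"
  obtain u0 where u0: "\<And>u. u \<ge> u0 \<Longrightarrow> B \<le> \<sigma> u"
    using lim unfolding filterlim_at_top eventually_at_top_linorder by blast
  show "eventually (\<lambda>t. B \<le> lower_conj (iota \<sigma>) t) at_top"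
    using eventually_ge_at_top[of "B * u0"] eventually_ge_at_top[of 0]
  proof eventually_elim
    case (elim t)
    show ?case
    proof (rule le_lower_conj_iota)
      fix u :: real
      assume "u > 0"
      show "B \<le> \<sigma> u + t / u"
      proof (cases "u \<ge> u0")
        case True
        then show ?thesis using u0 elim \<open>u > 0\<close> by (simp add: add_increasing2)
      next
        case False
        then have "B * u \<le> t"
          using \<open>B \<ge> 0\<close> elim by (smt (verit) mult_left_mono)
        then show ?thesis
          using nonneg[OF \<open>u > 0\<close>] \<open>u > 0\<close> by (simp add: le_divide_eq add_increasing)
      qed
    qed
  qed
qed

lemma P_prop_lower_conj_iota_less_one:
  assumes nonneg: "\<And>u. u > 0 \<Longrightarrow> 0 \<le> \<sigma> u" and lim: "filterlim \<sigma> at_top at_top"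
    and "0 < \<gamma>" "\<gamma> < 1"
  shows "P_prop (lower_conj (iota \<sigma>)) \<gamma>"
proof -
  have "(2::real) powr \<gamma> < 2"
    using powr_less_mono[OF \<open>\<gamma> < 1\<close>, of 2] by simp
  moreover have "eventually (\<lambda>t. lower_conj (iota \<sigma>) (2 * t) \<le> 2 * lower_conj (iota \<sigma>) t) at_top"
    using eventually_ge_at_top[of 0] by eventually_elim (simp add: lower_conj_iota_mult_le nonneg)
  ultimately show ?thesis
    by (intro P_propI[OF \<open>0 < \<gamma>\<close> filterlim_lower_conj_iota_at_top[OF nonneg lim], of 2]) auto
qed

lemma eventually_lower_conj_iota_mult_le:
  assumes nonneg: "\<And>u. u > 0 \<Longrightarrow> 0 \<le> \<sigma> u" and "L > 0" "q \<ge> 1"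
    and "eventually (\<lambda>u. \<sigma> (L * u) \<le> q * \<sigma> u) at_top"
  shows "eventually (\<lambda>t. lower_conj (iota \<sigma>) (L * q * t) \<le> q * lower_conj (iota \<sigma>) t) at_top"
proof -
  let ?g = "lower_conj (iota \<sigma>)"
  obtain u0 where "u0 > 0" and u0: "\<And>u. u \<ge> u0 \<Longrightarrow> \<sigma> (L * u) \<le> q * \<sigma> u"
    using assms(4) unfolding eventually_at_top_linorder
    by (metis gt_ex le_less_trans less_le_not_le linorder_le_less_linear)
  show ?thesis
    using eventually_ge_at_top[of "2 * u0 * \<sigma> (2 * L * u0) / q"] eventually_ge_at_top[of 0]
  proof eventually_elim
    case (elim t)
    have Lqt: "L * q * t \<ge> 0" using \<open>L > 0\<close> \<open>q \<ge> 1\<close> elim by simp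
    show ?case
    proof (rule le_mult_lower_conj_iota)
      fix u :: real
      assume "u > 0"
      show "?g (L * q * t) \<le> q * (\<sigma> u + t / u)"
      proof (cases "u \<ge> u0")
        case True
        have "?g (L * q * t) \<le> \<sigma> (L * u) + L * q * t / (L * u)"
          using lower_conj_iota_le[of \<sigma> "L * q * t" "L * u"] nonneg Lqt \<open>u > 0\<close> \<open>L > 0\<close> by simp
        also have "\<dots> \<le> q * \<sigma> u + q * (t / u)"
          using u0[OF True] \<open>L > 0\<close> by simp
        finally show ?thesis by (simp add: algebra_simps)
      next
        case False
        \<comment> \<open>Small \<open>u\<close> are beaten by the single test point \<open>2 L u0\<close>, whose cost
          \<open>\<sigma> (2 L u0)\<close> is absorbed into \<open>q t / (2 u0)\<close> once \<open>t\<close> is large.\<close>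
        have "?g (L * q * t) \<le> \<sigma> (2 * L * u0) + L * q * t / (2 * L * u0)"
          using lower_conj_iota_le[of \<sigma> "L * q * t" "2 * L * u0"] nonneg Lqt \<open>u0 > 0\<close> \<open>L > 0\<close>
          by simp
        also have "\<dots> \<le> q * (t / u0)"
          using elim \<open>u0 > 0\<close> \<open>L > 0\<close> \<open>q \<ge> 1\<close> by (simp add: field_simps)
        also have "\<dots> \<le> q * (\<sigma> u + t / u)"
          using False \<open>u > 0\<close> elim nonneg[OF \<open>u > 0\<close>] \<open>q \<ge> 1\<close>
          by (intro mult_left_mono add_increasing divide_left_mono) auto
        finally show ?thesis .
      qed
    qed (use \<open>q \<ge> 1\<close> in simp)
  qed
qed

lemma P_prop_lower_conj_iota_add_one:
  assumes nonneg: "\<And>u. u > 0 \<Longrightarrow> 0 \<le> \<sigma> u" and lim: "filterlim \<sigma> at_top at_top"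
    and "\<gamma> > 0" and "P_prop \<sigma> \<gamma>"
  shows "P_prop (lower_conj (iota \<sigma>)) (\<gamma> + 1)"
proof -
  obtain L q where "1 \<le> q" "q powr \<gamma> < L" and ev: "eventually (\<lambda>u. \<sigma> (L * u) \<le> q * \<sigma> u) at_top"
    using P_propE[OF \<open>P_prop \<sigma> \<gamma>\<close> \<open>\<gamma> > 0\<close> lim] by blast
  have "L > 0" using \<open>1 \<le> q\<close> \<open>q powr \<gamma> < L\<close> by (smt (verit) powr_gt_zero)
  have "q powr (\<gamma> + 1) = q powr \<gamma> * q" using \<open>1 \<le> q\<close> by (simp add: powr_add)
  also have "\<dots> < L * q" using \<open>q powr \<gamma> < L\<close> \<open>1 \<le> q\<close> by simp
  finally have "q powr (\<gamma> + 1) < L * q" .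
  then show ?thesis
    using \<open>\<gamma> > 0\<close> \<open>1 \<le> q\<close> eventually_lower_conj_iota_mult_le[OF nonneg \<open>L > 0\<close> \<open>1 \<le> q\<close> ev]
    by (intro P_propI[OF _ filterlim_lower_conj_iota_at_top[OF nonneg lim]]) auto
qed

lemma upper_conj_lower_conj_iota_le:
  assumes nonneg: "\<And>u. u > 0 \<Longrightarrow> 0 \<le> \<sigma> u" and "N > 0" "Q \<ge> 0"
    and "eventually (\<lambda>t. lower_conj (iota \<sigma>) (N * t) \<le> Q * lower_conj (iota \<sigma>) t) at_top"
  shows "\<exists>D. \<forall>x>0. upper_conj (lower_conj (iota \<sigma>)) (Q / (N * x)) \<le> Q * \<sigma> x + D"
proof -
  let ?g = "lower_conj (iota \<sigma>)"
  obtain t0 where "t0 \<ge> 0" and t0: "\<And>t. t \<ge> t0 \<Longrightarrow> ?g (N * t) \<le> Q * ?g t"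
    using assms(4) unfolding eventually_at_top_linorder by (metis linorder_le_cases order_trans)
  have "upper_conj ?g (Q / (N * x)) \<le> Q * \<sigma> x + (\<sigma> 1 + N * t0)" if "x > 0" for x
    unfolding upper_conj_def
  proof (rule cSUP_least)
    fix t :: real
    assume "t \<in> {0..}"
    then have "t \<ge> 0" by simp
    have "Q * \<sigma> x \<ge> 0" "Q / (N * x) * t \<ge> 0"
      using nonneg \<open>x > 0\<close> \<open>N > 0\<close> \<open>Q \<ge> 0\<close> \<open>t \<ge> 0\<close> by simp_all
    show "?g t - Q / (N * x) * t \<le> Q * \<sigma> x + (\<sigma> 1 + N * t0)"
    proof (cases "t \<ge> N * t0")
      case True
      then have "t / N \<ge> t0" using \<open>N > 0\<close> by (simp add: le_divide_eq mult.commute)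
      then have "?g t \<le> Q * ?g (t / N)"
        using t0 \<open>N > 0\<close> by fastforce
      also have "\<dots> \<le> Q * (\<sigma> x + t / N / x)"
        using lower_conj_iota_le[of \<sigma> "t / N" x] nonneg \<open>t \<ge> 0\<close> \<open>N > 0\<close> \<open>x > 0\<close> \<open>Q \<ge> 0\<close>
        by (intro mult_left_mono) auto
      also have "\<dots> = Q * \<sigma> x + Q / (N * x) * t"
        by (simp add: field_simps)
      moreover have "N * t0 \<ge> 0" using \<open>t0 \<ge> 0\<close> \<open>N > 0\<close> by simp
      ultimately show ?thesis
        using nonneg[of 1] by simp
    next
      case False
      have "?g t \<le> \<sigma> 1 + t"
        using lower_conj_iota_le[of \<sigma> t 1] nonneg \<open>t \<ge> 0\<close> by simp
      then show ?thesis
        using False \<open>Q * \<sigma> x \<ge> 0\<close> \<open>Q / (N * x) * t \<ge> 0\<close> by linarith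
    qed
  qed auto
  then show ?thesis by blast
qed

lemma eventually_mult_le_if_iota_le_upper_conj:
  assumes nonneg: "\<And>u. u > 0 \<Longrightarrow> 0 \<le> \<sigma> u" and lim: "filterlim \<sigma> at_top at_top"
    and C: "C \<ge> 0" "\<And>s. s > 0 \<Longrightarrow> iota \<sigma> s \<le> C * upper_conj (lower_conj (iota \<sigma>)) s + C"
    and "N > 0" "Q \<ge> 1"
    and "eventually (\<lambda>t. lower_conj (iota \<sigma>) (N * t) \<le> Q * lower_conj (iota \<sigma>) t) at_top"
  shows "eventually (\<lambda>x. \<sigma> (N / Q * x) \<le> (C + 1) * Q * \<sigma> x) at_top"
proof -
  obtain D where D: "\<And>x. x > 0 \<Longrightarrow> upper_conj (lower_conj (iota \<sigma>)) (Q / (N * x)) \<le> Q * \<sigma> x + D"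
    using upper_conj_lower_conj_iota_le[of \<sigma> N Q] nonneg assms(5-7) by auto
  have "eventually (\<lambda>x. C * D + C \<le> \<sigma> x) at_top"
    using lim by (simp add: filterlim_at_top)
  then show ?thesis
    using eventually_gt_at_top[of 0]
  proof eventually_elim
    case (elim x)
    have "Q / (N * x) > 0" using \<open>N > 0\<close> \<open>Q \<ge> 1\<close> elim by simp
    then have "iota \<sigma> (Q / (N * x)) \<le> C * (Q * \<sigma> x + D) + C"
      using C D[OF \<open>x > 0\<close>] by (smt (verit) mult_left_mono)
    moreover have "iota \<sigma> (Q / (N * x)) = \<sigma> (N / Q * x)"
      by (simp add: iota_def)
    moreover have "\<sigma> x \<le> Q * \<sigma> x"
      using nonneg[of x] \<open>Q \<ge> 1\<close> elim by (simp add: mult_le_cancel_right1)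
    ultimately show ?case
      using elim by (simp add: algebra_simps)
  qed
qed

lemma P_prop_diff_one_if_P_prop_lower_conj_iota:
  assumes nonneg: "\<And>u. u > 0 \<Longrightarrow> 0 \<le> \<sigma> u" and lim: "filterlim \<sigma> at_top at_top"
    and eqv: "equiv_on {0<..} (iota \<sigma>) (upper_conj (lower_conj (iota \<sigma>)))"
    and "\<gamma> > 1" and "P_prop (lower_conj (iota \<sigma>)) \<gamma>"
  shows "P_prop \<sigma> (\<gamma> - 1)"
proof -
  let ?g = "lower_conj (iota \<sigma>)"
  obtain C where "C \<ge> 1" and C: "\<And>s. s > 0 \<Longrightarrow> iota \<sigma> s \<le> C * upper_conj ?g s + C"
    using eqv unfolding equiv_on_def by auto
  obtain L q where "1 \<le> q" "q powr \<gamma> < L" and ev: "eventually (\<lambda>t. ?g (L * t) \<le> q * ?g t) at_top"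
    using P_propE[OF assms(5) _ filterlim_lower_conj_iota_at_top[OF nonneg lim]] \<open>\<gamma> > 1\<close>
    by (metis less_trans zero_less_one)
  have "L \<ge> 1"
    using \<open>1 \<le> q\<close> \<open>\<gamma> > 1\<close> \<open>q powr \<gamma> < L\<close> ge_one_powr_ge_zero[of q \<gamma>] by simp
  \<comment> \<open>Enough iterations of the growth bound of \<open>?g\<close> absorb the equivalence constant \<open>C\<close>.\<close>
  obtain n where n: "((C + 1) * q ^ n) powr (\<gamma> - 1) < L ^ n / q ^ n"
    using ex_mult_power_powr_less[of "C + 1" q \<gamma> L] \<open>C \<ge> 1\<close> \<open>1 \<le> q\<close> \<open>q powr \<gamma> < L\<close> by auto
  have "eventually (\<lambda>x. \<sigma> (L ^ n / q ^ n * x) \<le> (C + 1) * q ^ n * \<sigma> x) at_top"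
    using eventually_mult_le_if_iota_le_upper_conj[OF nonneg lim _ C, of "L ^ n" "q ^ n"]
      eventually_power_mult_le[OF \<open>L \<ge> 1\<close> _ ev, of n] \<open>C \<ge> 1\<close> \<open>L \<ge> 1\<close> \<open>1 \<le> q\<close>
    by simp
  moreover have "1 \<le> (C + 1) * q ^ n"
    using \<open>C \<ge> 1\<close> \<open>1 \<le> q\<close> mult_mono[of 1 "C + 1" 1 "q ^ n"] by simp
  ultimately show ?thesis
    using n \<open>\<gamma> > 1\<close> by (intro P_propI[OF _ lim]) auto
qed

lemma gamma_idx_eq_Sup_insert_0:
  "gamma_idx f = Sup (insert 0 (ereal ` {\<gamma>. \<gamma> > 0 \<and> P_prop f \<gamma>}))"
proof (cases "\<exists>\<gamma>>0. P_prop f \<gamma>")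
  case True
  then obtain \<gamma> where "\<gamma> > 0" "P_prop f \<gamma>" by blast
  then have "0 \<le> Sup (ereal ` {\<gamma>. \<gamma> > 0 \<and> P_prop f \<gamma>})"
    by (intro Sup_upper2[of "ereal \<gamma>"]) auto
  then show ?thesis
    using True by (simp add: gamma_idx_def sup_absorb2)
next
  case False
  then have empty: "{\<gamma>. \<gamma> > 0 \<and> P_prop f \<gamma>} = {}" by blast
  show ?thesis unfolding gamma_idx_def empty using False by auto
qed

lemma Sup_insert_0_add_one:
  fixes A B :: "real set"
  assumes "{0<..<1} \<subseteq> B" and "\<And>a. a \<in> A \<Longrightarrow> a + 1 \<in> B"
    and "\<And>b. b \<in> B \<Longrightarrow> b > 1 \<Longrightarrow> b - 1 \<in> A"
  shows "Sup (insert 0 (ereal ` A)) + 1 = Sup (insert 0 (ereal ` B))"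
proof -
  have one_le: "1 \<le> Sup (insert 0 (ereal ` B))"
  proof (rule dense_le)
    fix y :: ereal
    assume "y < 1"
    then have "max y 0 < 1" by simp
    then obtain z where z: "max y 0 < ereal z" "ereal z < 1"
      using ereal_dense2 by blast
    then have "z \<in> B" using assms(1) by auto
    then show "y \<le> Sup (insert 0 (ereal ` B))"
      using z by (intro Sup_upper2[of "ereal z"]) auto
  qed
  have "Sup (insert 0 (ereal ` A)) + 1 = (SUP x\<in>insert 0 (ereal ` A). x + 1)"
    by (subst SUP_ereal_add_left) auto
  also have "\<dots> = Sup (insert 0 (ereal ` B))"
  proof (rule order.antisym)
    show "(SUP x\<in>insert 0 (ereal ` A). x + 1) \<le> Sup (insert 0 (ereal ` B))"
    proof (rule SUP_least)
      fix x
      assume "x \<in> insert 0 (ereal ` A)"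
      then consider "x = 0" | a where "a \<in> A" "x = ereal a" by blast
      then show "x + 1 \<le> Sup (insert 0 (ereal ` B))"
      proof cases
        case 1
        then show ?thesis using one_le by simp
      next
        case 2
        then have "ereal (a + 1) \<le> Sup (insert 0 (ereal ` B))"
          using assms(2) by (intro Sup_upper) blast
        then show ?thesis using 2 by simp
      qed
    qed
  next
    show "Sup (insert 0 (ereal ` B)) \<le> (SUP x\<in>insert 0 (ereal ` A). x + 1)"
    proof (rule Sup_least)
      fix y
      assume "y \<in> insert 0 (ereal ` B)"
      then consider "y \<le> 1" | b where "b \<in> B" "b > 1" "y = ereal b"
        by force
      then show "y \<le> (SUP x\<in>insert 0 (ereal ` A). x + 1)"
      proof cases
        case 1
        then show ?thesis by (intro SUP_upper2[of 0]) auto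
      next
        case 2
        then show ?thesis
          using assms(3) by (intro SUP_upper2[of "ereal (b - 1)"]) auto
      qed
    qed
  qed
  finally show ?thesis .
qed

theorem proposition2p22:
  fixes \<sigma> :: "real \<Rightarrow> real"
  assumes "\<forall>t\<ge>0. \<sigma> t \<ge> 0"
    and "mono_on {0..} \<sigma>"
    and "filterlim \<sigma> at_top at_top"
    and "equiv_on {0<..} (iota \<sigma>) (upper_conj (lower_conj (iota \<sigma>)))"
  shows "gamma_idx \<sigma> + 1 = gamma_idx (lower_conj (iota \<sigma>))"
proof -
  have nonneg: "\<And>u. u > 0 \<Longrightarrow> 0 \<le> \<sigma> u" using assms(1) by simp
  note lim = assms(3) and eqv = assms(4)
  show ?thesis
    unfolding gamma_idx_eq_Sup_insert_0
  proof (rule Sup_insert_0_add_one)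
    show "{0<..<1} \<subseteq> {\<gamma>. \<gamma> > 0 \<and> P_prop (lower_conj (iota \<sigma>)) \<gamma>}"
      using P_prop_lower_conj_iota_less_one[OF nonneg lim] by auto
  next
    fix a
    assume "a \<in> {\<gamma>. \<gamma> > 0 \<and> P_prop \<sigma> \<gamma>}"
    then show "a + 1 \<in> {\<gamma>. \<gamma> > 0 \<and> P_prop (lower_conj (iota \<sigma>)) \<gamma>}"
      using P_prop_lower_conj_iota_add_one[OF nonneg lim] by auto
  next
    fix b
    assume "b \<in> {\<gamma>. \<gamma> > 0 \<and> P_prop (lower_conj (iota \<sigma>)) \<gamma>}" "b > 1"
    then show "b - 1 \<in> {\<gamma>. \<gamma> > 0 \<and> P_prop \<sigma> \<gamma>}"
      using P_prop_diff_one_if_P_prop_lower_conj_iota[OF nonneg lim eqv] by auto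
  qed
qed

end
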